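(* Suppose $\hat q^{[k]}\in\Delta_\delta$ for all $k\ge1$. Then for every round $t\ge2$, all $s\in\mathcal S$, $a\in\mathcal A$, and every integer $l\ge0$, regardless of the history up to round $t-1$ (i.e. conditionally on any such history), $\Pr\big((s^t,a^t)\ne(s,a),\dots,(s^{t+l},a^{t+l})\ne(s,a)\big)\le(1-\alpha\delta)^{l+1}$.
   Context: $\mathcal S,\mathcal A$ finite; $P$ is a transition kernel with $P(s'|s,a)\ge\alpha>0$ for all $s,s',a$, and $s^{t+1}\sim P(\cdot|s^t,a^t)$. $\Delta$ is the set of $q\in\mathbb R_+^{\mathcal S\times\mathcal A\times\mathcal S}$ with $\sum_{s,a,s'}q(s,a,s')=1$ and $\sum_{s',a}q(s',a,s)=\sum_{a,s'}q(s,a,s')$ for all $s$; $\Delta_\delta=\{q\in\Delta:\sum_{s'}q(s,a,s')\ge\delta\ \forall s,a\}$ for $\delta\in(0,1)$; the policy induced by $q$ is $\pi^q(a|s)=\sum_{s'}q(s,a,s')/\sum_{a',s'}q(s,a',s')$. In algorithm IHMDP-VCG, time is divided into episodes $k=1,2,\dots$; in each round $t$ of episode $k$ the action is drawn as $a^t\sim\pi^{[k]}(\cdot|s^t)$ with $\pi^{[k]}=\pi^{\hat q^{[k]}}$, where $\hat q^{[k]}$ is determined by the history before episode $k$. *)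

theory Defs
  imports "HOL-Probability.Probability"
begin

definition Delta :: "('s::finite \<Rightarrow> 'a::finite \<Rightarrow> 's \<Rightarrow> real) set" where
  "Delta = {q. (\<forall>s a s'. 0 \<le> q s a s') \<and>
               (\<Sum>s\<in>UNIV. \<Sum>a\<in>UNIV. \<Sum>s'\<in>UNIV. q s a s') = 1 \<and>
               (\<forall>s. (\<Sum>s'\<in>UNIV. \<Sum>a\<in>UNIV. q s' a s) = (\<Sum>a\<in>UNIV. \<Sum>s'\<in>UNIV. q s a s'))}"

definition Delta_delta :: "real \<Rightarrow> ('s::finite \<Rightarrow> 'a::finite \<Rightarrow> 's \<Rightarrow> real) set" where
  "Delta_delta \<delta> = {q \<in> Delta. \<forall>s a. (\<Sum>s'\<in>UNIV. q s a s') \<ge> \<delta>}"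

definition pi_q :: "('s::finite \<Rightarrow> 'a::finite \<Rightarrow> 's \<Rightarrow> real) \<Rightarrow> 's \<Rightarrow> 'a \<Rightarrow> real" where
  "pi_q q s a = (\<Sum>s'\<in>UNIV. q s a s') / (\<Sum>a'\<in>UNIV. \<Sum>s'\<in>UNIV. q s a' s')"

definition policy_pmf :: "('s::finite \<Rightarrow> 'a::finite \<Rightarrow> 's \<Rightarrow> real) \<Rightarrow> 's \<Rightarrow> 'a pmf" where
  "policy_pmf q s = embed_pmf (pi_q q s)"

text \<open>Future trajectory: given the history h = [(s^1,a^1),...,(s^{t-1},a^{t-1})] (nonempty),
  generate the next n state-action pairs (s^t,a^t),...,(s^{t+n-1},a^{t+n-1}).
  The occupancy measure used for the action at a round is Q applied to the history
  strictly before that round (the algorithm's q-hat of the current episode is a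
  function of the history before the episode, hence of this history).\<close>

primrec traj :: "('s::finite \<Rightarrow> 'a::finite \<Rightarrow> 's pmf) \<Rightarrow> (('s \<times> 'a) list \<Rightarrow> ('s \<Rightarrow> 'a \<Rightarrow> 's \<Rightarrow> real))
                 \<Rightarrow> ('s \<times> 'a) list \<Rightarrow> nat \<Rightarrow> ('s \<times> 'a) list pmf" where
  "traj P Q h 0 = return_pmf []"
| "traj P Q h (Suc n) =
     bind_pmf (P (fst (last h)) (snd (last h))) (\<lambda>s'.
     bind_pmf (policy_pmf (Q h) s') (\<lambda>a'.
     map_pmf (\<lambda>rest. (s', a') # rest) (traj P Q (h @ [(s', a')]) n)))"

end

theory Submission
  imports Defs
begin

text \<open>Whatever the history, the next state is s with probability at least \<alpha>, and the
  policy then plays a with probability at least \<delta>: for q \<in> Delta_delta \<delta> the row mass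
  q(s) = \<Sum>a s'. q s a s' is at most the total mass 1, so \<pi>_q(a|s) = q(s,a)/q(s) \<ge> q(s,a) \<ge> \<delta>.
  Hence every round hits (s,a) with conditional probability at least \<alpha>\<delta>, and conditioning
  on the first round and inducting on the length gives the geometric bound.\<close>

lemma measure_pmf_prob_bind_finite:
  fixes M :: "'b::finite pmf"
  shows "measure_pmf.prob (bind_pmf M f) A = (\<Sum>x\<in>UNIV. pmf M x * measure_pmf.prob (f x) A)"
proof -
  have "emeasure (measure_pmf (bind_pmf M f)) A = (\<Sum>x\<in>UNIV. emeasure (measure_pmf (f x)) A * pmf M x)"
    by (simp, rule nn_integral_measure_pmf_support) auto
  also have "\<dots> = ennreal (\<Sum>x\<in>UNIV. pmf M x * measure_pmf.prob (f x) A)"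
    by (subst sum_ennreal[symmetric])
      (auto simp: measure_pmf.emeasure_eq_measure ennreal_mult' mult.commute)
  finally show ?thesis
    by (simp add: measure_pmf.emeasure_eq_measure sum_nonneg)
qed

lemma sum_pmf_kernel_avoid:
  fixes M :: "'s::finite pmf" and K :: "'s \<Rightarrow> 'a::finite pmf"
  shows "(\<Sum>x\<in>UNIV. pmf M x * (\<Sum>y\<in>UNIV. pmf (K x) y * (if (x, y) = (s, a) then 0 else 1)))
           = 1 - pmf M s * pmf (K s) a"
proof -
  have "(\<Sum>y\<in>UNIV. pmf (K x) y * (if (x, y) = (s, a) then 0 else 1))
          = 1 - (if x = s then pmf (K s) a else 0)" for x
    by (simp add: if_distrib[of "(*) _"] sum.If_cases sum_pmf_eq_1 sum_diff1 Compl_eq_Diff_UNIV)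
  then show ?thesis
    by (simp add: right_diff_distrib sum_subtractf sum_pmf_eq_1 if_distrib[of "(*) _"] sum.If_cases)
qed

lemma pmf_policy_pmf:
  fixes q :: "'s::finite \<Rightarrow> 'a::finite \<Rightarrow> 's \<Rightarrow> real"
  assumes nonneg: "\<And>s a s'. 0 \<le> q s a s'"
    and row_pos: "0 < (\<Sum>a'\<in>UNIV. \<Sum>s'\<in>UNIV. q s a' s')"
  shows "pmf (policy_pmf q s) a = pi_q q s a"
  unfolding policy_pmf_def
proof (rule pmf_embed_pmf)
  show "0 \<le> pi_q q s x" for x
    unfolding pi_q_def using row_pos by (auto intro!: divide_nonneg_pos sum_nonneg nonneg)
  moreover have "(\<Sum>x\<in>UNIV. pi_q q s x) = 1"
    unfolding pi_q_def using row_pos by (simp add: sum_divide_distrib[symmetric])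
  ultimately show "(\<integral>\<^sup>+x. ennreal (pi_q q s x) \<partial>count_space UNIV) = 1"
    by (simp add: nn_integral_count_space_finite sum_ennreal)
qed

lemma Delta_delta_row_mass_bounds:
  fixes q :: "'s::finite \<Rightarrow> 'a::finite \<Rightarrow> 's \<Rightarrow> real"
  assumes q: "q \<in> Delta_delta \<delta>"
  shows "\<delta> \<le> (\<Sum>a'\<in>UNIV. \<Sum>s'\<in>UNIV. q s a' s')"
    and "(\<Sum>a'\<in>UNIV. \<Sum>s'\<in>UNIV. q s a' s') \<le> 1"
proof -
  have nonneg: "\<And>s a s'. 0 \<le> q s a s'"
    and total: "(\<Sum>s\<in>UNIV. \<Sum>a\<in>UNIV. \<Sum>s'\<in>UNIV. q s a s') = 1"
    and entry: "\<delta> \<le> (\<Sum>s'\<in>UNIV. q s a s')"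
    using q by (auto simp: Delta_delta_def Delta_def)
  have "(\<Sum>s'\<in>UNIV. q s a s') \<le> (\<Sum>a'\<in>UNIV. \<Sum>s'\<in>UNIV. q s a' s')"
    by (rule member_le_sum) (auto intro: sum_nonneg nonneg)
  with entry show "\<delta> \<le> (\<Sum>a'\<in>UNIV. \<Sum>s'\<in>UNIV. q s a' s')"
    by linarith
  show "(\<Sum>a'\<in>UNIV. \<Sum>s'\<in>UNIV. q s a' s') \<le> 1"
    unfolding total[symmetric]
    by (rule member_le_sum[where f = "\<lambda>s. \<Sum>a\<in>UNIV. \<Sum>s'\<in>UNIV. q s a s'"])
      (auto intro!: sum_nonneg nonneg)
qed

lemma pi_q_ge_Delta_delta:
  assumes q: "q \<in> Delta_delta \<delta>" and "0 < \<delta>"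
  shows "\<delta> \<le> pi_q q s a"
proof -
  define row where "row = (\<Sum>a'\<in>UNIV. \<Sum>s'\<in>UNIV. q s a' s')"
  have "0 < row" and "row \<le> 1"
    using Delta_delta_row_mass_bounds[OF q, of s] \<open>0 < \<delta>\<close> unfolding row_def by auto
  have "\<delta> * row \<le> \<delta>"
    using \<open>row \<le> 1\<close> \<open>0 < \<delta>\<close> by (simp add: mult_left_le)
  also have "\<dots> \<le> (\<Sum>s'\<in>UNIV. q s a s')"
    using q by (simp add: Delta_delta_def)
  finally show ?thesis
    unfolding pi_q_def row_def[symmetric] using \<open>0 < row\<close> by (simp add: pos_le_divide_eq)
qed

lemma pmf_policy_pmf_ge_Delta_delta:
  assumes q: "q \<in> Delta_delta \<delta>" and "0 < \<delta>"
  shows "\<delta> \<le> pmf (policy_pmf q s) a"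
proof -
  have nonneg: "\<And>s a s'. 0 \<le> q s a s'"
    using q by (auto simp: Delta_delta_def Delta_def)
  have "0 < (\<Sum>a'\<in>UNIV. \<Sum>s'\<in>UNIV. q s a' s')"
    using Delta_delta_row_mass_bounds(1)[OF q, of s] \<open>0 < \<delta>\<close> by linarith
  then show ?thesis
    using pmf_policy_pmf[where q = q, OF nonneg] pi_q_ge_Delta_delta[OF assms] by simp
qed

lemma prob_traj_avoid_le:
  fixes P :: "'s::finite \<Rightarrow> 'a::finite \<Rightarrow> 's pmf"
    and Q :: "('s \<times> 'a) list \<Rightarrow> ('s \<Rightarrow> 'a \<Rightarrow> 's \<Rightarrow> real)"
  assumes hit: "\<And>h. p \<le> pmf (P (fst (last h)) (snd (last h))) s * pmf (policy_pmf (Q h) s) a"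
  shows "measure_pmf.prob (traj P Q h n) {xs. \<forall>x\<in>set xs. x \<noteq> (s, a)} \<le> (1 - p) ^ n"
proof (induction n arbitrary: h)
  case 0
  then show ?case by simp
next
  case (Suc n)
  define A where "A = {xs. \<forall>x\<in>set xs. x \<noteq> (s, a)}"
  define M where "M = P (fst (last h)) (snd (last h))"
  define \<pi> where "\<pi> = policy_pmf (Q h)"
  define c where "c = (1 - p) ^ n"
  have "c \<ge> 0"
  proof -
    have "pmf M s * pmf (\<pi> s) a \<le> 1"
      by (simp add: mult_le_one pmf_le_1)
    then show ?thesis
      using hit[of h] unfolding c_def M_def \<pi>_def by simp
  qed
  have first_step: "measure_pmf.prob (map_pmf (Cons (s', a')) (traj P Q (h @ [(s', a')]) n)) A
      \<le> (if (s', a') = (s, a) then 0 else 1) * c" for s' a'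
    using Suc.IH[of "h @ [(s', a')]"] by (auto simp: A_def c_def vimage_def)
  have "measure_pmf.prob (traj P Q h (Suc n)) A =
     (\<Sum>s'\<in>UNIV. pmf M s' * (\<Sum>a'\<in>UNIV. pmf (\<pi> s') a' *
        measure_pmf.prob (map_pmf (Cons (s', a')) (traj P Q (h @ [(s', a')]) n)) A))"
    by (simp add: measure_pmf_prob_bind_finite M_def \<pi>_def del: measure_map_pmf)
  also have "\<dots> \<le> (\<Sum>s'\<in>UNIV. pmf M s' * (\<Sum>a'\<in>UNIV. pmf (\<pi> s') a' *
        ((if (s', a') = (s, a) then 0 else 1) * c)))"
    by (intro sum_mono mult_left_mono first_step pmf_nonneg sum_nonneg)
  also have "\<dots> = (\<Sum>s'\<in>UNIV. pmf M s' * (\<Sum>a'\<in>UNIV. pmf (\<pi> s') a' *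
        (if (s', a') = (s, a) then 0 else 1))) * c"
    by (simp add: sum_distrib_left sum_distrib_right mult.assoc)
  also have "\<dots> = (1 - pmf M s * pmf (\<pi> s) a) * c"
    by (simp only: sum_pmf_kernel_avoid)
  also have "\<dots> \<le> (1 - p) * c"
    using hit[of h] \<open>c \<ge> 0\<close> unfolding M_def \<pi>_def by (intro mult_right_mono) auto
  finally show ?case
    unfolding A_def c_def by simp
qed

theorem lemma7:
  fixes P :: "'s::finite \<Rightarrow> 'a::finite \<Rightarrow> 's pmf"
    and Q :: "('s \<times> 'a) list \<Rightarrow> ('s \<Rightarrow> 'a \<Rightarrow> 's \<Rightarrow> real)"
    and \<alpha> \<delta> :: real and h :: "('s \<times> 'a) list"
    and s :: 's and a :: 'a and l :: nat
  assumes "\<alpha> > 0"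
    and "\<forall>x b y. pmf (P x b) y \<ge> \<alpha>"
    and "0 < \<delta>" and "\<delta> < 1"
    and "\<forall>g. Q g \<in> Delta_delta \<delta>"
    and "h \<noteq> []"
  shows "measure_pmf.prob (traj P Q h (Suc l)) {xs. \<forall>x\<in>set xs. x \<noteq> (s, a)}
           \<le> (1 - \<alpha> * \<delta>) ^ (Suc l)"
proof (rule prob_traj_avoid_le)
  fix g :: "('s \<times> 'a) list"
  have "\<alpha> \<le> pmf (P (fst (last g)) (snd (last g))) s"
    using assms(2) by blast
  moreover have "\<delta> \<le> pmf (policy_pmf (Q g) s) a"
    using assms(3,5) by (blast intro: pmf_policy_pmf_ge_Delta_delta)
  ultimately show "\<alpha> * \<delta> \<le> pmf (P (fst (last g)) (snd (last g))) s * pmf (policy_pmf (Q g) s) a"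
    using \<open>0 < \<delta>\<close> by (intro mult_mono) auto
qed

end
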